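(* Let $n=2$ and let $(X,\mathbf h,\Lambda,\widetilde B)$ be a quantum seed with $b_{12}\neq0$, and let $X'_1$, $X'_2$ be the corresponding cluster variables of $\mu_1(X,\mathbf h,\Lambda,\widetilde B)$ and $\mu_2(X,\mathbf h,\Lambda,\widetilde B)$. Then $$\mathbb{ZP}[X_1,X'_1,X_2^{\pm1}]=\mathbb{ZP}[X_1,X'_1,X_2,X'_2]+\mathbb{ZP}[X_1,X_2^{\pm1}].$$
   Context: Notation: $[a,b]=\{a,a+1,\dots,b\}$; $[x]_+=\max(x,0)$, applied entrywise to vectors; $e_1,\dots,e_m$ is the standard basis of $\mathbb Z^m$. Fix integers $m\ge n\ge 1$. A compatible pair $(\Lambda,\widetilde B)$ consists of an $m\times n$ integer matrix $\widetilde B=(b_{kl})$ and a skew-symmetric $m\times m$ integer matrix $\Lambda$ such that $\Lambda\widetilde B=-\begin{bmatrix}D\\0\end{bmatrix}$ for some $D=\mathrm{diag}(\tilde d_1,\dots,\tilde d_n)$ with all $\tilde d_k\in\mathbb Z_{>0}$. Write $\Lambda(a,b)=a^T\Lambda b$. Fix positive integers $d_1,\dots,d_n$ such that $d_k$ divides every entry of the $k$-th column $b^k$ of $\widetilde B$; $\beta^k=\frac1{d_k}b^k$. The quantum torus $\mathcal T(\Lambda)$ is the $\mathbb Z[q^{\pm1/2}]$-algebra with basis $\{X(c)\mid c\in\mathbb Z^m\}$ and multiplication $X(c)X(d)=q^{\frac12\Lambda(c,d)}X(c+d)$; $\mathcal F$ is its skew field of fractions, $X_k=X(e_k)$. For $k\in[1,n]$,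 $\mathbf h_k=(h_{k,0},\dots,h_{k,d_k})$ with $h_{k,r}\in\mathbb Z[q^{\pm1/2}]$, $h_{k,r}=h_{k,d_k-r}$, $h_{k,0}=h_{k,d_k}=1$. A quantum seed $(X,\mathbf h,\Lambda,\widetilde B)$ consists of these data and the map $X:c\mapsto X(c)$. Its mutation in direction $i$ has cluster variables $X'_k=X_k$ for $k\ne i$ and $X'_i=\sum_{r=0}^{d_i}h_{i,r}X(r[\beta^i]_++(d_i-r)[-\beta^i]_+-e_i)$. $\mathbb{ZP}$ is the ring of Laurent polynomials in $X_{n+1},\dots,X_m$ with coefficients in $\mathbb Z[q^{\pm1/2}]$; for $Y_1,\dots,Y_s\in\mathcal F$, $\mathbb{ZP}[Y_1,\dots,Y_s]$ is the subring of $\mathcal F$ generated by $\mathbb{ZP}$ and the $Y_k$ (exponent $\pm1$ means both $Y$ and $Y^{-1}$ are adjoined). The sum of two such subrings means the set of sums of elements (an additive subgroup of $\mathcal F$). *)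

theory Defs
  imports Main "HOL-Library.Poly_Mapping"
begin

text \<open>Model of the quantum torus T(Lambda) over Z[q^(+-1/2)].
  Write t = q^(1/2). T(Lambda) is the free Z-module with basis t^k X(c),
  k in Z, c in Z^m, and (t^k X(c)) (t^l X(d)) = t^(k+l+Lambda(c,d)) X(c+d).
  An element is a finitely supported map (k,c) to its integer coefficient.
  Vectors of Z^m are functions nat to int (indices 1..m; always 0 elsewhere).\<close>

type_synonym vec = "nat \<Rightarrow> int"
type_synonym qtorus = "(int \<times> vec) \<Rightarrow>\<^sub>0 int"
type_synonym laurent = "int \<Rightarrow>\<^sub>0 int"  \<comment> \<open>Z[t^(+-1)], t = q^(1/2)\<close>

definition lam :: "nat \<Rightarrow> (nat \<Rightarrow> nat \<Rightarrow> int) \<Rightarrow> vec \<Rightarrow> vec \<Rightarrow> int" where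
  "lam m L a b = (\<Sum>i\<in>{1..m}. \<Sum>j\<in>{1..m}. a i * L i j * b j)"

definition gmul :: "nat \<Rightarrow> (nat \<Rightarrow> nat \<Rightarrow> int) \<Rightarrow> int \<times> vec \<Rightarrow> int \<times> vec \<Rightarrow> int \<times> vec" where
  "gmul m L x y = (fst x + fst y + lam m L (snd x) (snd y), (\<lambda>i. snd x i + snd y i))"

definition qmult :: "nat \<Rightarrow> (nat \<Rightarrow> nat \<Rightarrow> int) \<Rightarrow> qtorus \<Rightarrow> qtorus \<Rightarrow> qtorus" where
  "qmult m L f g = (\<Sum>x\<in>Poly_Mapping.keys f. \<Sum>y\<in>Poly_Mapping.keys g.
       Poly_Mapping.single (gmul m L x y) (Poly_Mapping.lookup f x * Poly_Mapping.lookup g y))"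

definition Xmon :: "vec \<Rightarrow> qtorus" where
  "Xmon c = Poly_Mapping.single (0, c) 1"

definition zvec :: vec where "zvec = (\<lambda>_. 0)"

definition coef :: "laurent \<Rightarrow> qtorus" where
  "coef p = (\<Sum>k\<in>Poly_Mapping.keys p. Poly_Mapping.single (k, zvec) (Poly_Mapping.lookup p k))"

definition unitv :: "nat \<Rightarrow> vec" where
  "unitv k = (\<lambda>j. if j = k then 1 else 0)"

definition vneg :: "vec \<Rightarrow> vec" where "vneg v = (\<lambda>j. - v j)"

definition vpos :: "vec \<Rightarrow> vec" where "vpos v = (\<lambda>j. max (v j) 0)"

definition beta :: "nat \<Rightarrow> (nat \<Rightarrow> nat \<Rightarrow> int) \<Rightarrow> (nat \<Rightarrow> nat) \<Rightarrow> nat \<Rightarrow> vec" where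
  "beta m B d i = (\<lambda>k. if k \<in> {1..m} then B k i div int (d i) else 0)"

text \<open>The cluster variable X'_i of the mutation mu_i of the seed.\<close>
definition Xmut :: "nat \<Rightarrow> (nat \<Rightarrow> nat \<Rightarrow> int) \<Rightarrow> (nat \<Rightarrow> nat \<Rightarrow> int) \<Rightarrow> (nat \<Rightarrow> nat)
     \<Rightarrow> (nat \<Rightarrow> nat \<Rightarrow> laurent) \<Rightarrow> nat \<Rightarrow> qtorus" where
  "Xmut m L B d h i = (\<Sum>r\<in>{0..d i}. qmult m L (coef (h i r))
      (Xmon (\<lambda>k. int r * vpos (beta m B d i) k
               + int (d i - r) * vpos (vneg (beta m B d i)) k - unitv i k)))"

inductive_set gen_subring :: "nat \<Rightarrow> (nat \<Rightarrow> nat \<Rightarrow> int) \<Rightarrow> qtorus set \<Rightarrow> qtorus set"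
  for m L S where
  base: "x \<in> S \<Longrightarrow> x \<in> gen_subring m L S"
| one: "Xmon zvec \<in> gen_subring m L S"
| zero: "0 \<in> gen_subring m L S"
| add: "x \<in> gen_subring m L S \<Longrightarrow> y \<in> gen_subring m L S \<Longrightarrow> x + y \<in> gen_subring m L S"
| neg: "x \<in> gen_subring m L S \<Longrightarrow> - x \<in> gen_subring m L S"
| mult: "x \<in> gen_subring m L S \<Longrightarrow> y \<in> gen_subring m L S \<Longrightarrow> qmult m L x y \<in> gen_subring m L S"

text \<open>Generators of ZP: the coefficients and X_j^(+-1) for frozen j in [n+1,m].\<close>
definition ZP_gens :: "nat \<Rightarrow> nat \<Rightarrow> qtorus set" where
  "ZP_gens n m = range coef \<union> Xmon ` unitv ` {n+1..m} \<union> Xmon ` (\<lambda>j. vneg (unitv j)) ` {n+1..m}"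

text \<open>ZP[Y_1,...,Y_s] (Y's given as a set; for exponent +-1 include both Y and Y^(-1)).\<close>
definition ZP_adj :: "nat \<Rightarrow> nat \<Rightarrow> (nat \<Rightarrow> nat \<Rightarrow> int) \<Rightarrow> qtorus set \<Rightarrow> qtorus set" where
  "ZP_adj n m L Ys = gen_subring m L (ZP_gens n m \<union> Ys)"

definition set_plus_q :: "qtorus set \<Rightarrow> qtorus set \<Rightarrow> qtorus set" where
  "set_plus_q A B = {a + b | a b. a \<in> A \<and> b \<in> B}"

end

(*
  Let C = ZP[X1, X2^(+-1)] and A = ZP[X1, X1', X2, X2'].  Both lie in ZP[X1, X1', X2^(+-1)], which is
  generated by A and C, so it suffices that A + C is closed under multiplication, and for this that
  X1' X^c and X^c X1' lie in A + C for every Laurent monomial X^c of C, i.e. for every c with c_1 >= 0.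
  All exponents of X1' have first coordinate -1, so for c_1 >= 1 both products lie in C, and for
  c_1 = 0, c_2 >= 0 they lie in A.  Since b_12 <> 0, exactly one term X^p of X2' is free of X1, and it
  has p_2 = -1.  For c_1 = 0, c_2 < 0 write X^c = X^u X^p up to a power of q and substitute
  X^p = X2' - (terms divisible by X1): as X2' lies in both A and C, induction on -c_2 concludes.
*)
theory Submission
  imports Defs "HOL-Library.Function_Algebras"
begin

section \<open>The quantum torus\<close>

lemma zvec_eq_0: "zvec = 0"
  by (simp add: zvec_def zero_fun_def)

lemma vneg_eq_uminus: "vneg v = - v"
  by (simp add: vneg_def fun_Compl_def)

lemma lam_add_left: "lam m L (a + b) c = lam m L a c + lam m L b c"
  by (simp add: lam_def distrib_right sum.distrib)

lemma lam_add_right: "lam m L a (b + c) = lam m L a b + lam m L a c"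
  by (simp add: lam_def distrib_left sum.distrib)

lemma lam_zero_left [simp]: "lam m L 0 c = 0"
  by (simp add: lam_def)

lemma lam_zero_right [simp]: "lam m L c 0 = 0"
  by (simp add: lam_def)

lemma gmul_Pair: "gmul m L (k, a) (l, b) = (k + l + lam m L a b, a + b)"
  by (simp add: gmul_def plus_fun_def)

lemma gmul_assoc: "gmul m L (gmul m L x y) z = gmul m L x (gmul m L y z)"
  by (cases x, cases y, cases z) (simp add: gmul_Pair lam_add_left lam_add_right add_ac)

lemma gmul_unit_left: "gmul m L (0, 0) x = x"
  by (cases x) (simp add: gmul_Pair)

lemma gmul_unit_right: "gmul m L x (0, 0) = x"
  by (cases x) (simp add: gmul_Pair)

lemma qmult_eq_sum_supersets:
  assumes "finite S" "finite T" "Poly_Mapping.keys f \<subseteq> S" "Poly_Mapping.keys g \<subseteq> T"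
  shows "qmult m L f g = (\<Sum>x\<in>S. \<Sum>y\<in>T.
       Poly_Mapping.single (gmul m L x y) (Poly_Mapping.lookup f x * Poly_Mapping.lookup g y))"
  unfolding qmult_def using assms
  by (intro sum.mono_neutral_left sum.mono_neutral_cong_left ballI) (auto simp: in_keys_iff)

lemma qmult_add_left: "qmult m L (f + g) k = qmult m L f k + qmult m L g k"
  using keys_add[of f g]
  by (subst (1 2 3) qmult_eq_sum_supersets[where S = "Poly_Mapping.keys f \<union> Poly_Mapping.keys g"
        and T = "Poly_Mapping.keys k"])
    (auto simp: lookup_add distrib_right single_add sum.distrib)

lemma qmult_add_right: "qmult m L k (f + g) = qmult m L k f + qmult m L k g"
  using keys_add[of f g]
  by (subst (1 2 3) qmult_eq_sum_supersets[where S = "Poly_Mapping.keys k"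
        and T = "Poly_Mapping.keys f \<union> Poly_Mapping.keys g"])
    (auto simp: lookup_add distrib_left single_add sum.distrib)

lemma qmult_zero_left [simp]: "qmult m L 0 f = 0"
  by (simp add: qmult_def)

lemma qmult_zero_right [simp]: "qmult m L f 0 = 0"
  by (simp add: qmult_def)

lemma qmult_minus_left: "qmult m L (- f) g = - qmult m L f g"
  using qmult_add_left[of m L f "- f" g] by (simp add: eq_neg_iff_add_eq_0 add.commute)

lemma qmult_minus_right: "qmult m L f (- g) = - qmult m L f g"
  using qmult_add_right[of m L f g "- g"] by (simp add: eq_neg_iff_add_eq_0 add.commute)

lemma qmult_diff_left: "qmult m L (f - g) k = qmult m L f k - qmult m L g k"
  using qmult_add_left[of m L f "- g" k] by (simp add: qmult_minus_left)

lemma qmult_diff_right: "qmult m L k (f - g) = qmult m L k f - qmult m L k g"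
  using qmult_add_right[of m L k f "- g"] by (simp add: qmult_minus_right)

lemma qmult_frag_of: "qmult m L (frag_of x) (frag_of y) = frag_of (gmul m L x y)"
  by (subst qmult_eq_sum_supersets[where S = "{x}" and T = "{y}"]) auto

lemma qmult_assoc: "qmult m L (qmult m L f g) k = qmult m L f (qmult m L g k)"
  using subset_UNIV
proof (induction f rule: frag_induction)
  case (one x)
  show ?case
    using subset_UNIV
  proof (induction g rule: frag_induction)
    case (one y)
    show ?case
      using subset_UNIV by (induction k rule: frag_induction)
        (simp_all add: qmult_frag_of gmul_assoc qmult_diff_right)
  qed (simp_all add: qmult_diff_left qmult_diff_right)
qed (simp_all add: qmult_diff_left)

lemma qmult_Xmon_0_left [simp]: "qmult m L (Xmon 0) f = f"
  using subset_UNIV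
  by (induct f rule: frag_induction)
    (simp_all only: Xmon_def qmult_frag_of gmul_unit_left qmult_zero_right qmult_diff_right)

lemma qmult_Xmon_0_right [simp]: "qmult m L f (Xmon 0) = f"
  using subset_UNIV
  by (induct f rule: frag_induction)
    (simp_all only: Xmon_def qmult_frag_of gmul_unit_right qmult_zero_left qmult_diff_left)

(* t^k, where t = q^(1/2) *)
definition tpow :: "int \<Rightarrow> qtorus" where
  "tpow k = coef (Poly_Mapping.single k 1)"

lemma tpow_eq_frag_of: "tpow k = frag_of (k, 0)"
  by (simp add: tpow_def coef_def zvec_eq_0)

lemma coef_one: "coef 1 = Xmon 0"
  using tpow_eq_frag_of[of 0] by (simp add: tpow_def Xmon_def)

lemma frag_of_eq_tpow_Xmon: "frag_of (k, c) = qmult m L (tpow k) (Xmon c)"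
  by (simp add: tpow_eq_frag_of Xmon_def qmult_frag_of gmul_Pair)

lemma tpow_commute: "qmult m L (tpow k) f = qmult m L f (tpow k)"
  using subset_UNIV
proof (induction f rule: frag_induction)
  case (one x)
  show ?case
    by (cases x) (simp add: tpow_eq_frag_of qmult_frag_of gmul_Pair add.commute)
qed (simp_all add: qmult_diff_left qmult_diff_right)

lemma Xmon_add: "Xmon (a + b) = qmult m L (qmult m L (Xmon a) (Xmon b)) (tpow (- lam m L a b))"
  by (simp add: tpow_eq_frag_of Xmon_def qmult_frag_of gmul_Pair)

section \<open>Exponent vectors\<close>

definition exponents :: "qtorus \<Rightarrow> vec set" where
  "exponents f = snd ` Poly_Mapping.keys f"

lemma keys_qmult:
  "Poly_Mapping.keys (qmult m L f g)
     \<subseteq> {gmul m L x y | x y. x \<in> Poly_Mapping.keys f \<and> y \<in> Poly_Mapping.keys g}"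
  unfolding qmult_def
  by (rule order.trans[OF keys_sum], rule UN_least, rule order.trans[OF keys_sum]) auto

lemma exponents_add: "exponents (f + g) \<subseteq> exponents f \<union> exponents g"
  unfolding exponents_def image_Un[symmetric] by (rule image_mono[OF keys_add])

lemma exponents_uminus [simp]: "exponents (- f) = exponents f"
  by (simp add: exponents_def)

lemma exponents_diff: "exponents (f - g) \<subseteq> exponents f \<union> exponents g"
  using exponents_add[of f "- g"] by simp

lemma exponents_sum: "exponents (\<Sum>i\<in>I. f i) \<subseteq> (\<Union>i\<in>I. exponents (f i))"
  unfolding exponents_def image_UN[symmetric] by (rule image_mono[OF keys_sum])

lemma exponents_qmult:
  "exponents (qmult m L f g) \<subseteq> {a + b | a b. a \<in> exponents f \<and> b \<in> exponents g}"
  unfolding exponents_def using keys_qmult[of m L f g] by (force simp: gmul_def)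

lemma exponents_qmultE:
  assumes "c \<in> exponents (qmult m L f g)"
  obtains a b where "a \<in> exponents f" "b \<in> exponents g" "c = a + b"
  using assms exponents_qmult[of m L f g] by blast

lemma exponents_Xmon [simp]: "exponents (Xmon c) = {c}"
  by (simp add: exponents_def Xmon_def)

lemma exponents_tpow [simp]: "exponents (tpow k) = {0}"
  by (simp add: exponents_def tpow_eq_frag_of)

lemma exponents_coef: "exponents (coef p) \<subseteq> {0}"
  unfolding coef_def exponents_def zvec_eq_0
  using keys_sum[of "\<lambda>k. Poly_Mapping.single (k, 0) (Poly_Mapping.lookup p k)" "Poly_Mapping.keys p"]
  by auto

lemma exponents_coef_Xmon: "exponents (qmult m L (coef p) (Xmon c)) \<subseteq> {c}"
proof
  fix v assume "v \<in> exponents (qmult m L (coef p) (Xmon c))"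
  then obtain a where "a \<in> exponents (coef p)" "v = a + c"
    by (auto elim: exponents_qmultE)
  then show "v \<in> {c}"
    using exponents_coef[of p] by auto
qed

definition lattice_vec :: "nat \<Rightarrow> vec \<Rightarrow> bool" where
  "lattice_vec m c \<longleftrightarrow> (\<forall>i. i \<notin> {1..m} \<longrightarrow> c i = 0)"

lemma lattice_vec_zero [simp]: "lattice_vec m 0"
  by (simp add: lattice_vec_def)

lemma lattice_vec_add: "lattice_vec m a \<Longrightarrow> lattice_vec m b \<Longrightarrow> lattice_vec m (a + b)"
  by (simp add: lattice_vec_def)

section \<open>Subalgebras over the coefficient ring\<close>

locale qsubmodule =
  fixes m :: nat and L :: "nat \<Rightarrow> nat \<Rightarrow> int" and R :: "qtorus set"
  assumes zero_mem: "0 \<in> R"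
    and diff_mem: "x \<in> R \<Longrightarrow> y \<in> R \<Longrightarrow> x - y \<in> R"
    and tpow_mult_mem: "x \<in> R \<Longrightarrow> qmult m L (tpow k) x \<in> R"
begin

lemma uminus_mem: "x \<in> R \<Longrightarrow> - x \<in> R"
  using diff_mem[OF zero_mem] by fastforce

lemma add_mem: "x \<in> R \<Longrightarrow> y \<in> R \<Longrightarrow> x + y \<in> R"
  using diff_mem[of x "- y"] uminus_mem by simp

lemma mult_tpow_mem: "x \<in> R \<Longrightarrow> qmult m L x (tpow k) \<in> R"
  using tpow_mult_mem by (simp flip: tpow_commute)

lemma qmult_mem_if_exponents_right:
  assumes "\<And>c. c \<in> exponents f \<Longrightarrow> qmult m L g (Xmon c) \<in> R"
  shows "qmult m L g f \<in> R"
proof (rule frag_induction[of f "Poly_Mapping.keys f" "\<lambda>h. qmult m L g h \<in> R"])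
  fix x assume x: "x \<in> Poly_Mapping.keys f"
  obtain k c where kc: "x = (k, c)" by fastforce
  with x have "c \<in> exponents f"
    by (force simp: exponents_def)
  then have "qmult m L (qmult m L g (Xmon c)) (tpow k) \<in> R"
    using assms mult_tpow_mem by blast
  then show "qmult m L g (frag_of x) \<in> R"
    by (simp add: kc frag_of_eq_tpow_Xmon[of _ _ m L] tpow_commute qmult_assoc)
qed (simp_all add: zero_mem diff_mem qmult_diff_right)

lemma qmult_mem_if_exponents_left:
  assumes "\<And>c. c \<in> exponents f \<Longrightarrow> qmult m L (Xmon c) g \<in> R"
  shows "qmult m L f g \<in> R"
proof (rule frag_induction[of f "Poly_Mapping.keys f" "\<lambda>h. qmult m L h g \<in> R"])
  fix x assume x: "x \<in> Poly_Mapping.keys f"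
  obtain k c where kc: "x = (k, c)" by fastforce
  with x have "c \<in> exponents f"
    by (force simp: exponents_def)
  then have "qmult m L (tpow k) (qmult m L (Xmon c) g) \<in> R"
    using assms tpow_mult_mem by blast
  then show "qmult m L (frag_of x) g \<in> R"
    by (simp add: kc frag_of_eq_tpow_Xmon[of _ _ m L] qmult_assoc)
qed (simp_all add: zero_mem diff_mem qmult_diff_left)

end

locale qsubalgebra =
  fixes m :: nat and L :: "nat \<Rightarrow> nat \<Rightarrow> int" and R :: "qtorus set"
  assumes tpow_mem: "tpow k \<in> R"
    and diff_mem: "x \<in> R \<Longrightarrow> y \<in> R \<Longrightarrow> x - y \<in> R"
    and mult_mem: "x \<in> R \<Longrightarrow> y \<in> R \<Longrightarrow> qmult m L x y \<in> R"
begin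

sublocale qsubmodule
proof
  show "0 \<in> R"
    using diff_mem[OF tpow_mem tpow_mem, of 0 0] by simp
qed (auto intro: tpow_mem diff_mem mult_mem)

lemma one_mem: "Xmon 0 \<in> R"
  using tpow_mem[of 0] by (simp add: tpow_eq_frag_of Xmon_def)

lemma mem_if_exponents: "(\<And>c. c \<in> exponents f \<Longrightarrow> Xmon c \<in> R) \<Longrightarrow> f \<in> R"
  using qmult_mem_if_exponents_right[of f "Xmon 0"] by simp

lemma Xmon_add_mem: "Xmon a \<in> R \<Longrightarrow> Xmon b \<in> R \<Longrightarrow> Xmon (a + b) \<in> R"
  by (simp add: Xmon_add[of _ _ m L] mult_mem mult_tpow_mem)

lemma Xmon_multiple_mem: "Xmon v \<in> R \<Longrightarrow> Xmon (\<lambda>i. int k * v i) \<in> R"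
proof (induction k)
  case 0
  then show ?case using one_mem by (simp add: zero_fun_def)
next
  case (Suc k)
  then have "Xmon ((\<lambda>i. int k * v i) + v) \<in> R"
    by (simp add: Xmon_add_mem)
  then show ?case by (simp add: plus_fun_def algebra_simps)
qed

lemma Xmon_coordinate_mem:
  assumes "0 < z \<Longrightarrow> Xmon (unitv j) \<in> R" "z < 0 \<Longrightarrow> Xmon (- unitv j) \<in> R"
  shows "Xmon (\<lambda>i. if i = j then z else 0) \<in> R"
proof (cases z "0 :: int" rule: linorder_cases)
  case less
  then have "(\<lambda>i. if i = j then z else 0) = (\<lambda>i. int (nat (- z)) * (- unitv j) i)"
    by (auto simp: unitv_def)
  then show ?thesis using Xmon_multiple_mem assms(2)[OF less] by metis
next
  case equal
  then have "(\<lambda>i. if i = j then z else 0) = 0"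
    by (auto simp: zero_fun_def)
  then show ?thesis using one_mem by simp
next
  case greater
  then have "(\<lambda>i. if i = j then z else 0) = (\<lambda>i. int (nat z) * unitv j i)"
    by (auto simp: unitv_def)
  then show ?thesis using Xmon_multiple_mem assms(1)[OF greater] by metis
qed

lemma Xmon_mem:
  assumes "lattice_vec m c"
    and "\<And>j. j \<in> {1..m} \<Longrightarrow> 0 < c j \<Longrightarrow> Xmon (unitv j) \<in> R"
    and "\<And>j. j \<in> {1..m} \<Longrightarrow> c j < 0 \<Longrightarrow> Xmon (- unitv j) \<in> R"
  shows "Xmon c \<in> R"
proof -
  have "Xmon (\<lambda>i. if i \<in> J then c i else 0) \<in> R" if "finite J" "J \<subseteq> {1..m}" for J
    using that
  proof (induction J rule: finite_induct)
    case empty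
    then show ?case using one_mem by (simp add: zero_fun_def)
  next
    case (insert j J)
    then have "Xmon ((\<lambda>i. if i \<in> J then c i else 0) + (\<lambda>i. if i = j then c j else 0)) \<in> R"
      using assms(2,3) by (simp add: Xmon_add_mem Xmon_coordinate_mem)
    moreover have "(\<lambda>i. if i \<in> J then c i else 0) + (\<lambda>i. if i = j then c j else 0)
        = (\<lambda>i. if i \<in> insert j J then c i else 0)"
      using insert.hyps(2) by (auto simp: plus_fun_def)
    ultimately show ?case by simp
  qed
  moreover have "(\<lambda>i. if i \<in> {1..m} then c i else 0) = c"
    using assms(1) by (auto simp: lattice_vec_def)
  ultimately show ?thesis by (metis finite_atLeastAtMost order_refl)
qed

end

lemma qsubalgebra_gen_subring:
  assumes "range tpow \<subseteq> S"
  shows "qsubalgebra m L (gen_subring m L S)"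
proof
  show "x - y \<in> gen_subring m L S" if "x \<in> gen_subring m L S" "y \<in> gen_subring m L S" for x y
    using gen_subring.add[OF that(1) gen_subring.neg[OF that(2)]] by simp
qed (use assms in \<open>auto intro: gen_subring.intros\<close>)

lemma gen_subring_least:
  assumes "qsubalgebra m L R" "S \<subseteq> R"
  shows "gen_subring m L S \<subseteq> R"
proof
  interpret qsubalgebra m L R by fact
  fix x assume "x \<in> gen_subring m L S"
  then show "x \<in> R"
    by induction
      (use assms(2) one_mem in \<open>auto simp: zvec_eq_0 intro: zero_mem add_mem uminus_mem mult_mem\<close>)
qed

lemma qsubalgebra_exponents:
  assumes "P 0" "\<And>a b. P a \<Longrightarrow> P b \<Longrightarrow> P (a + b)"
  shows "qsubalgebra m L {f. \<forall>c\<in>exponents f. P c}"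
proof
  show "tpow k \<in> {f. \<forall>c\<in>exponents f. P c}" for k
    using assms(1) by simp
  show "x - y \<in> {f. \<forall>c\<in>exponents f. P c}"
    if "x \<in> {f. \<forall>c\<in>exponents f. P c}" "y \<in> {f. \<forall>c\<in>exponents f. P c}" for x y
    using that exponents_diff[of x y] by blast
  show "qmult m L x y \<in> {f. \<forall>c\<in>exponents f. P c}"
    if "x \<in> {f. \<forall>c\<in>exponents f. P c}" "y \<in> {f. \<forall>c\<in>exponents f. P c}" for x y
    using that exponents_qmult[of m L x y] assms(2) by blast
qed

section \<open>Sums of subalgebras\<close>

lemma set_plus_qI: "a \<in> A \<Longrightarrow> c \<in> C \<Longrightarrow> a + c \<in> set_plus_q A C"
  unfolding set_plus_q_def by blast

lemma set_plus_qE: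
  assumes "x \<in> set_plus_q A C"
  obtains a c where "x = a + c" "a \<in> A" "c \<in> C"
  using assms unfolding set_plus_q_def by blast

lemma set_plus_q_left: "a \<in> A \<Longrightarrow> 0 \<in> C \<Longrightarrow> a \<in> set_plus_q A C"
  using set_plus_qI[of a A 0 C] by simp

lemma set_plus_q_right: "c \<in> C \<Longrightarrow> 0 \<in> A \<Longrightarrow> c \<in> set_plus_q A C"
  using set_plus_qI[of 0 A c C] by simp

lemma qsubmodule_set_plus:
  assumes "qsubalgebra m L A" "qsubalgebra m L C"
  shows "qsubmodule m L (set_plus_q A C)"
proof -
  interpret A: qsubalgebra m L A by fact
  interpret C: qsubalgebra m L C by fact
  show ?thesis
  proof
    show "0 \<in> set_plus_q A C"
      using set_plus_qI[OF A.zero_mem C.zero_mem] by simp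
    show "x - y \<in> set_plus_q A C" if xy: "x \<in> set_plus_q A C" "y \<in> set_plus_q A C" for x y
    proof -
      obtain a c where "x = a + c" "a \<in> A" "c \<in> C"
        using xy(1) by (rule set_plus_qE)
      moreover obtain a' c' where "y = a' + c'" "a' \<in> A" "c' \<in> C"
        using xy(2) by (rule set_plus_qE)
      ultimately have "x - y = (a - a') + (c - c')"
        by (simp add: algebra_simps)
      then show ?thesis
        by (simp add: set_plus_qI A.diff_mem C.diff_mem \<open>a \<in> A\<close> \<open>a' \<in> A\<close> \<open>c \<in> C\<close> \<open>c' \<in> C\<close>)
    qed
    show "qmult m L (tpow k) x \<in> set_plus_q A C" if x: "x \<in> set_plus_q A C" for x k
    proof -
      obtain a c where "x = a + c" "a \<in> A" "c \<in> C"
        using x by (rule set_plus_qE)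
      then show ?thesis
        by (simp add: qmult_add_right set_plus_qI A.tpow_mult_mem C.tpow_mult_mem)
    qed
  qed
qed

lemma qmult_gen_subring_mem_set_plus:
  assumes S: "range tpow \<subseteq> S" and C: "qsubalgebra m L C"
    and generators: "\<And>s c. s \<in> S \<Longrightarrow> c \<in> C \<Longrightarrow>
      qmult m L s c \<in> set_plus_q (gen_subring m L S) C \<and> qmult m L c s \<in> set_plus_q (gen_subring m L S) C"
    and "a \<in> gen_subring m L S" "c \<in> C"
  shows "qmult m L a c \<in> set_plus_q (gen_subring m L S) C \<and> qmult m L c a \<in> set_plus_q (gen_subring m L S) C"
  using \<open>a \<in> gen_subring m L S\<close> \<open>c \<in> C\<close>
proof (induction a arbitrary: c rule: gen_subring.induct)
  let ?A = "gen_subring m L S"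
  interpret A: qsubalgebra m L ?A
    using S by (rule qsubalgebra_gen_subring)
  interpret C: qsubalgebra m L C by fact
  interpret AC: qsubmodule m L "set_plus_q ?A C"
    using qsubalgebra_gen_subring[OF S] C by (rule qsubmodule_set_plus)
  {
    case (base x)
    then show ?case using generators by blast
  next
    case one
    then show ?case using set_plus_q_right[OF _ A.zero_mem] by (simp add: zvec_eq_0)
  next
    case zero
    then show ?case using AC.zero_mem by simp
  next
    case (add x y)
    then show ?case by (simp add: qmult_add_left qmult_add_right AC.add_mem)
  next
    case (neg x)
    then show ?case by (simp add: qmult_minus_left qmult_minus_right AC.uminus_mem)
  next
    case (mult x y)
    obtain a1 c1 where yc: "qmult m L y c = a1 + c1" "a1 \<in> ?A" "c1 \<in> C"
      using mult.IH(2)[OF mult.prems] by (blast elim: set_plus_qE)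
    have "qmult m L (qmult m L x y) c = qmult m L x a1 + qmult m L x c1"
      by (simp add: qmult_assoc yc(1) qmult_add_right)
    moreover have "qmult m L x a1 \<in> set_plus_q ?A C"
      using A.mult_mem[OF mult.hyps(1) yc(2)] C.zero_mem by (rule set_plus_q_left)
    ultimately have left: "qmult m L (qmult m L x y) c \<in> set_plus_q ?A C"
      using mult.IH(1)[OF yc(3)] by (simp add: AC.add_mem)
    obtain a2 c2 where cx: "qmult m L c x = a2 + c2" "a2 \<in> ?A" "c2 \<in> C"
      using mult.IH(1)[OF mult.prems] by (blast elim: set_plus_qE)
    have "qmult m L c (qmult m L x y) = qmult m L a2 y + qmult m L c2 y"
      by (simp add: qmult_assoc[symmetric] cx(1) qmult_add_left)
    moreover have "qmult m L a2 y \<in> set_plus_q ?A C"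
      using A.mult_mem[OF cx(2) mult.hyps(2)] C.zero_mem by (rule set_plus_q_left)
    ultimately have "qmult m L c (qmult m L x y) \<in> set_plus_q ?A C"
      using mult.IH(2)[OF cx(3)] by (simp add: AC.add_mem)
    with left show ?case ..
  }
qed

lemma qsubalgebra_set_plus:
  assumes A: "qsubalgebra m L A" and C: "qsubalgebra m L C"
    and mixed: "\<And>a c. a \<in> A \<Longrightarrow> c \<in> C \<Longrightarrow>
      qmult m L a c \<in> set_plus_q A C \<and> qmult m L c a \<in> set_plus_q A C"
  shows "qsubalgebra m L (set_plus_q A C)"
proof -
  interpret A: qsubalgebra m L A by fact
  interpret C: qsubalgebra m L C by fact
  interpret AC: qsubmodule m L "set_plus_q A C"
    using A C by (rule qsubmodule_set_plus)
  show ?thesis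
  proof
    show "tpow k \<in> set_plus_q A C" for k
      using A.tpow_mem C.zero_mem by (rule set_plus_q_left)
    show "qmult m L x y \<in> set_plus_q A C" if xy: "x \<in> set_plus_q A C" "y \<in> set_plus_q A C" for x y
    proof -
      obtain a c where "x = a + c" "a \<in> A" "c \<in> C"
        using xy(1) by (rule set_plus_qE)
      moreover obtain a' c' where "y = a' + c'" "a' \<in> A" "c' \<in> C"
        using xy(2) by (rule set_plus_qE)
      ultimately have "qmult m L x y
          = (qmult m L a a' + qmult m L c a') + (qmult m L a c' + qmult m L c c')"
        by (simp only: qmult_add_left qmult_add_right)
      moreover have "qmult m L a a' \<in> set_plus_q A C" "qmult m L c c' \<in> set_plus_q A C"
        using A.mult_mem C.mult_mem set_plus_q_left[OF _ C.zero_mem] set_plus_q_right[OF _ A.zero_mem]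
          \<open>a \<in> A\<close> \<open>a' \<in> A\<close> \<open>c \<in> C\<close> \<open>c' \<in> C\<close> by blast+
      ultimately show ?thesis
        using mixed \<open>a \<in> A\<close> \<open>a' \<in> A\<close> \<open>c \<in> C\<close> \<open>c' \<in> C\<close> by (simp add: AC.add_mem)
    qed
  qed (rule AC.diff_mem)
qed

lemma qmult_set_plus_inter_mem:
  assumes "qsubalgebra m L A" "qsubalgebra m L C" "x \<in> set_plus_q A C" "y \<in> A" "y \<in> C"
  shows "qmult m L x y \<in> set_plus_q A C" "qmult m L y x \<in> set_plus_q A C"
proof -
  interpret A: qsubalgebra m L A by fact
  interpret C: qsubalgebra m L C by fact
  obtain a c where "x = a + c" "a \<in> A" "c \<in> C"
    using assms(3) by (rule set_plus_qE)
  then show "qmult m L x y \<in> set_plus_q A C" "qmult m L y x \<in> set_plus_q A C"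
    using assms(4,5) by (simp_all add: qmult_add_left qmult_add_right set_plus_qI A.mult_mem C.mult_mem)
qed

section \<open>The subrings ZP[Y]\<close>

lemma range_tpow_subset_ZP_gens: "range tpow \<subseteq> ZP_gens n m"
  by (auto simp: ZP_gens_def tpow_def)

lemma qsubalgebra_ZP_adj: "qsubalgebra m L (ZP_adj n m L Y)"
  unfolding ZP_adj_def using range_tpow_subset_ZP_gens by (blast intro: qsubalgebra_gen_subring)

lemma ZP_adj_least: "qsubalgebra m L R \<Longrightarrow> ZP_gens n m \<union> Y \<subseteq> R \<Longrightarrow> ZP_adj n m L Y \<subseteq> R"
  unfolding ZP_adj_def by (rule gen_subring_least)

lemma generator_mem_ZP_adj: "x \<in> ZP_gens n m \<union> Y \<Longrightarrow> x \<in> ZP_adj n m L Y"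
  unfolding ZP_adj_def by (rule gen_subring.base)

lemma Xmon_mem_ZP_adj:
  assumes "lattice_vec m c"
    and "\<And>j. j \<in> {1..n} \<Longrightarrow> 0 < c j \<Longrightarrow> Xmon (unitv j) \<in> Y"
    and "\<And>j. j \<in> {1..n} \<Longrightarrow> c j < 0 \<Longrightarrow> Xmon (- unitv j) \<in> Y"
  shows "Xmon c \<in> ZP_adj n m L Y"
proof -
  interpret qsubalgebra m L "ZP_adj n m L Y"
    by (rule qsubalgebra_ZP_adj)
  show ?thesis
  proof (rule Xmon_mem[OF assms(1)])
    show "Xmon (unitv j) \<in> ZP_adj n m L Y" if "j \<in> {1..m}" "0 < c j" for j
      using that assms(2)[of j]
      by (cases "j \<le> n") (auto simp: ZP_gens_def intro: generator_mem_ZP_adj)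
    show "Xmon (- unitv j) \<in> ZP_adj n m L Y" if "j \<in> {1..m}" "c j < 0" for j
      using that assms(3)[of j]
      by (cases "j \<le> n") (auto simp: ZP_gens_def vneg_eq_uminus intro: generator_mem_ZP_adj)
  qed
qed

section \<open>Mutation and compatible pairs\<close>

definition mut_exp :: "nat \<Rightarrow> (nat \<Rightarrow> nat \<Rightarrow> int) \<Rightarrow> (nat \<Rightarrow> nat) \<Rightarrow> nat \<Rightarrow> nat \<Rightarrow> vec" where
  "mut_exp m B d i r = (\<lambda>k. int r * vpos (beta m B d i) k
      + int (d i - r) * vpos (vneg (beta m B d i)) k - unitv i k)"

lemma Xmut_eq_sum:
  "Xmut m L B d h i = (\<Sum>r\<in>{0..d i}. qmult m L (coef (h i r)) (Xmon (mut_exp m B d i r)))"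
  unfolding Xmut_def mut_exp_def ..

lemma exponents_Xmut_subset: "exponents (Xmut m L B d h i) \<subseteq> mut_exp m B d i ` {0..d i}"
  unfolding Xmut_eq_sum using exponents_sum exponents_coef_Xmon by fastforce

lemma lattice_vec_mut_exp: "i \<in> {1..m} \<Longrightarrow> lattice_vec m (mut_exp m B d i r)"
  by (auto simp: lattice_vec_def mut_exp_def beta_def vpos_def vneg_def unitv_def)

lemma compatible_diag_eq_0:
  fixes L B :: "nat \<Rightarrow> nat \<Rightarrow> int"
  assumes skew: "\<forall>i\<in>{1..m}. \<forall>j\<in>{1..m}. L i j = - L j i"
    and compat: "\<forall>k\<in>{1..m}. (\<Sum>j\<in>{1..m}. L k j * B j l) = (if k = l then - dt else 0)"
    and l: "l \<in> {1..m}" and dt: "dt \<noteq> 0"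
  shows "B l l = 0"
proof -
  define Q where "Q = (\<Sum>k\<in>{1..m}. \<Sum>j\<in>{1..m}. B k l * L k j * B j l)"
  have "Q = (\<Sum>k\<in>{1..m}. B k l * (\<Sum>j\<in>{1..m}. L k j * B j l))"
    unfolding Q_def by (simp add: sum_distrib_left mult.assoc)
  also have "\<dots> = (\<Sum>k\<in>{1..m}. if k = l then - B l l * dt else 0)"
    using compat by (intro sum.cong) auto
  also have "\<dots> = - B l l * dt"
    using l by simp
  finally have Q_eq: "Q = - B l l * dt" .
  have "Q = (\<Sum>k\<in>{1..m}. \<Sum>j\<in>{1..m}. - (B j l * L j k * B k l))"
    unfolding Q_def
  proof (intro sum.cong refl)
    fix k j assume "k \<in> {1..m}" "j \<in> {1..m}"
    with skew have "L k j = - L j k" by blast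
    then show "B k l * L k j * B j l = - (B j l * L j k * B k l)" by (simp add: mult_ac)
  qed
  also have "\<dots> = - Q"
    unfolding Q_def by (subst sum.swap) (simp add: sum_negf)
  finally have "Q = 0" by simp
  with Q_eq dt show ?thesis by simp
qed

section \<open>Rank two\<close>

lemma atLeastAtMost_1_2: "{1..2::nat} = {1, 2}"
  by auto

locale rank2_seed =
  fixes m :: nat and L B :: "nat \<Rightarrow> nat \<Rightarrow> int" and d :: "nat \<Rightarrow> nat"
    and h :: "nat \<Rightarrow> nat \<Rightarrow> laurent"
  assumes two_le_m: "2 \<le> m"
    and B_diag: "B 1 1 = 0" "B 2 2 = 0"
    and d2_dvd_B12: "int (d 2) dvd B 1 2"
    and B12_nonzero: "B 1 2 \<noteq> 0"
    and h2_ends: "h 2 0 = Poly_Mapping.single 0 1" "h 2 (d 2) = Poly_Mapping.single 0 1"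
begin

(* keeps the index 1 literally as 1, so that rules about coordinate 1 still apply after simp *)
declare One_nat_def [simp del]

abbreviation "X1 \<equiv> Xmon (unitv 1)"
abbreviation "X2 \<equiv> Xmon (unitv 2)"
abbreviation "X2inv \<equiv> Xmon (vneg (unitv 2))"
abbreviation "X1' \<equiv> Xmut m L B d h 1"
abbreviation "X2' \<equiv> Xmut m L B d h 2"

abbreviation "Cring \<equiv> ZP_adj 2 m L {X1, X2, X2inv}"
abbreviation "Aring \<equiv> ZP_adj 2 m L {X1, X1', X2, X2'}"
abbreviation "Lring \<equiv> ZP_adj 2 m L {X1, X1', X2, X2inv}"
abbreviation "AC \<equiv> set_plus_q Aring Cring"

lemma lattice_vec_mut_exp_12: "i \<in> {1, 2} \<Longrightarrow> lattice_vec m (mut_exp m B d i r)"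
  using two_le_m by (auto intro: lattice_vec_mut_exp)

lemma mut_exp_diag: "i \<in> {1, 2} \<Longrightarrow> mut_exp m B d i r i = -1"
  using B_diag two_le_m by (auto simp: mut_exp_def beta_def vpos_def vneg_def unitv_def)

abbreviation "\<beta> \<equiv> B 1 2 div int (d 2)"

lemma d2_pos: "0 < d 2"
  using d2_dvd_B12 B12_nonzero by (cases "d 2") auto

lemma beta_sign: "0 < \<beta> \<longleftrightarrow> 0 < B 1 2" "\<beta> \<noteq> 0"
proof -
  obtain k where k: "B 1 2 = int (d 2) * k"
    using d2_dvd_B12 by (rule dvdE)
  then have "\<beta> = k"
    using d2_pos by simp
  with k show "0 < \<beta> \<longleftrightarrow> 0 < B 1 2" "\<beta> \<noteq> 0"
    using d2_pos B12_nonzero by (auto simp: zero_less_mult_iff)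
qed

lemma mut_exp_2_1: "mut_exp m B d 2 r 1 = int r * max \<beta> 0 + int (d 2 - r) * max (- \<beta>) 0"
  using two_le_m by (simp add: mut_exp_def beta_def vpos_def vneg_def unitv_def)

lemma mut_exp_2_1_nonneg: "0 \<le> mut_exp m B d 2 r 1"
  by (simp add: mut_exp_2_1)

(* the index of the only term of X2' in which X1 does not occur *)
definition r0 :: nat where
  "r0 = (if 0 < B 1 2 then 0 else d 2)"

abbreviation "p0 \<equiv> mut_exp m B d 2 r0"

lemma p0_coordinates: "lattice_vec m p0" "p0 1 = 0" "p0 2 = -1"
  using lattice_vec_mut_exp_12 mut_exp_diag beta_sign by (auto simp: mut_exp_2_1 r0_def)

lemma mut_exp_2_1_pos:
  assumes "r \<le> d 2" "r \<noteq> r0"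
  shows "1 \<le> mut_exp m B d 2 r 1"
proof (cases "0 < B 1 2")
  case True
  then have "1 \<le> \<beta>" "1 \<le> int r"
    using beta_sign assms by (auto simp: r0_def)
  then have "1 * 1 \<le> int r * \<beta>"
    by (intro mult_mono) auto
  with \<open>1 \<le> \<beta>\<close> show ?thesis by (simp add: mut_exp_2_1)
next
  case False
  then have "1 \<le> - \<beta>" "1 \<le> int (d 2 - r)"
    using beta_sign assms by (auto simp: r0_def)
  then have "1 * 1 \<le> int (d 2 - r) * - \<beta>"
    by (intro mult_mono) auto
  with \<open>1 \<le> - \<beta>\<close> assms(1) show ?thesis by (simp add: mut_exp_2_1)
qed

lemma X2'_split:
  obtains T where "X2' = Xmon p0 + T" and "\<And>c. c \<in> exponents T \<Longrightarrow> lattice_vec m c \<and> 1 \<le> c 1"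
proof
  let ?term = "\<lambda>r. qmult m L (coef (h 2 r)) (Xmon (mut_exp m B d 2 r))"
  have "h 2 r0 = 1"
    using h2_ends by (simp add: r0_def)
  then have "?term r0 = Xmon p0"
    by (simp add: coef_one)
  moreover have "r0 \<in> {0..d 2}"
    by (simp add: r0_def)
  ultimately show "X2' = Xmon p0 + (\<Sum>r\<in>{0..d 2} - {r0}. ?term r)"
    unfolding Xmut_eq_sum by (simp add: sum.remove)
  fix c assume "c \<in> exponents (\<Sum>r\<in>{0..d 2} - {r0}. ?term r)"
  then obtain r where "r \<in> {0..d 2} - {r0}" "c \<in> exponents (?term r)"
    using exponents_sum by blast
  moreover from this(2) have "c = mut_exp m B d 2 r"
    using exponents_coef_Xmon by blast
  ultimately show "lattice_vec m c \<and> 1 \<le> c 1"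
    using lattice_vec_mut_exp_12 mut_exp_2_1_pos by auto
qed

lemma Cring_eq: "Cring = {f. \<forall>c\<in>exponents f. lattice_vec m c \<and> 0 \<le> c 1}"
proof
  have "qsubalgebra m L {f. \<forall>c\<in>exponents f. lattice_vec m c \<and> 0 \<le> c 1}"
    by (rule qsubalgebra_exponents) (simp_all add: lattice_vec_add)
  moreover have "ZP_gens 2 m \<union> {X1, X2, X2inv} \<subseteq> {f. \<forall>c\<in>exponents f. lattice_vec m c \<and> 0 \<le> c 1}"
    using exponents_coef two_le_m by (fastforce simp: ZP_gens_def lattice_vec_def unitv_def vneg_def)
  ultimately show "Cring \<subseteq> {f. \<forall>c\<in>exponents f. lattice_vec m c \<and> 0 \<le> c 1}"
    by (rule ZP_adj_least)
next
  interpret qsubalgebra m L Cring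
    by (rule qsubalgebra_ZP_adj)
  show "{f. \<forall>c\<in>exponents f. lattice_vec m c \<and> 0 \<le> c 1} \<subseteq> Cring"
  proof (rule subsetI, rule mem_if_exponents)
    fix f c assume "f \<in> {f. \<forall>c\<in>exponents f. lattice_vec m c \<and> 0 \<le> c 1}" "c \<in> exponents f"
    then have "lattice_vec m c" "0 \<le> c 1" by auto
    then show "Xmon c \<in> Cring"
      by (intro Xmon_mem_ZP_adj) (auto simp: vneg_eq_uminus atLeastAtMost_1_2)
  qed
qed

lemma Xmon_mem_Aring: "lattice_vec m c \<Longrightarrow> 0 \<le> c 1 \<Longrightarrow> 0 \<le> c 2 \<Longrightarrow> Xmon c \<in> Aring"
  by (rule Xmon_mem_ZP_adj) (auto simp: atLeastAtMost_1_2)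

lemma X2'_mem_Cring: "X2' \<in> Cring"
  unfolding Cring_eq
  using exponents_Xmut_subset[of m L B d h 2] lattice_vec_mut_exp_12 mut_exp_2_1_nonneg by fastforce

lemma X1'_qmult_mem_Cring:
  assumes f: "\<And>c. c \<in> exponents f \<Longrightarrow> lattice_vec m c \<and> 1 \<le> c 1"
  shows "qmult m L X1' f \<in> Cring" "qmult m L f X1' \<in> Cring"
proof -
  have X1': "lattice_vec m a \<and> a 1 = -1" if "a \<in> exponents X1'" for a
    using that exponents_Xmut_subset[of m L B d h 1] lattice_vec_mut_exp_12 mut_exp_diag by fastforce
  show "qmult m L X1' f \<in> Cring"
    unfolding Cring_eq
  proof (intro CollectI ballI)
    fix c assume "c \<in> exponents (qmult m L X1' f)"
    then obtain a b where "a \<in> exponents X1'" "b \<in> exponents f" "c = a + b"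
      by (rule exponents_qmultE)
    with X1' f show "lattice_vec m c \<and> 0 \<le> c 1"
      by (force intro: lattice_vec_add)
  qed
  show "qmult m L f X1' \<in> Cring"
    unfolding Cring_eq
  proof (intro CollectI ballI)
    fix c assume "c \<in> exponents (qmult m L f X1')"
    then obtain a b where "a \<in> exponents f" "b \<in> exponents X1'" "c = a + b"
      by (rule exponents_qmultE)
    with X1' f show "lattice_vec m c \<and> 0 \<le> c 1"
      by (force intro: lattice_vec_add)
  qed
qed

lemma Cring_subset_AC: "Cring \<subseteq> AC"
proof -
  interpret qsubalgebra m L Aring
    by (rule qsubalgebra_ZP_adj)
  show ?thesis
    using zero_mem by (blast intro: set_plus_q_right)
qed

lemma Aring_subset_AC: "Aring \<subseteq> AC"
proof -
  interpret qsubalgebra m L Cring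
    by (rule qsubalgebra_ZP_adj)
  show ?thesis
    using zero_mem by (blast intro: set_plus_q_left)
qed

lemma qsubmodule_AC: "qsubmodule m L AC"
  using qsubalgebra_ZP_adj qsubalgebra_ZP_adj by (rule qsubmodule_set_plus)

lemma X1'_Xmon_add_p0_mem_AC:
  assumes u: "lattice_vec m u" "u 1 = 0"
    and IH: "qmult m L X1' (Xmon u) \<in> AC" "qmult m L (Xmon u) X1' \<in> AC"
  shows "qmult m L X1' (Xmon (u + p0)) \<in> AC" "qmult m L (Xmon (p0 + u)) X1' \<in> AC"
proof -
  interpret AC: qsubmodule m L AC
    by (rule qsubmodule_AC)
  obtain T where X2'_eq: "X2' = Xmon p0 + T"
    and T: "\<And>c. c \<in> exponents T \<Longrightarrow> lattice_vec m c \<and> 1 \<le> c 1"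
    using X2'_split by blast
  have Xp0_eq: "Xmon p0 = X2' - T"
    by (simp add: X2'_eq)
  have X2'_mem: "X2' \<in> Aring" "X2' \<in> Cring"
    by (simp_all add: generator_mem_ZP_adj X2'_mem_Cring)
  have "lattice_vec m v \<and> 1 \<le> v 1" if "v \<in> exponents (qmult m L (Xmon u) T)" for v
    using that u T by (elim exponents_qmultE) (auto intro: lattice_vec_add)
  moreover have "lattice_vec m v \<and> 1 \<le> v 1" if "v \<in> exponents (qmult m L T (Xmon u))" for v
    using that u T by (elim exponents_qmultE) (auto intro: lattice_vec_add)
  ultimately have uT: "qmult m L X1' (qmult m L (Xmon u) T) \<in> Cring"
      "qmult m L (qmult m L T (Xmon u)) X1' \<in> Cring"
    using X1'_qmult_mem_Cring by blast+
  have "qmult m L X1' (Xmon (u + p0))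
      = qmult m L (qmult m L (qmult m L X1' (Xmon u)) X2') (tpow (- lam m L u p0))
        - qmult m L (qmult m L X1' (qmult m L (Xmon u) T)) (tpow (- lam m L u p0))"
    by (simp add: Xmon_add[of u p0 m L] Xp0_eq qmult_assoc qmult_diff_left qmult_diff_right)
  also have "\<dots> \<in> AC"
    using qmult_set_plus_inter_mem(1)[OF qsubalgebra_ZP_adj qsubalgebra_ZP_adj IH(1) X2'_mem]
      uT(1) Cring_subset_AC
    by (blast intro: AC.diff_mem AC.mult_tpow_mem)
  finally show "qmult m L X1' (Xmon (u + p0)) \<in> AC" .
  have "Xmon (p0 + u) = qmult m L (tpow (- lam m L p0 u)) (qmult m L (Xmon p0) (Xmon u))"
    by (simp add: Xmon_add[of p0 u m L] tpow_commute)
  then have "qmult m L (Xmon (p0 + u)) X1'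
      = qmult m L (tpow (- lam m L p0 u)) (qmult m L X2' (qmult m L (Xmon u) X1'))
        - qmult m L (tpow (- lam m L p0 u)) (qmult m L (qmult m L T (Xmon u)) X1')"
    by (simp add: Xp0_eq qmult_assoc qmult_diff_left qmult_diff_right)
  also have "\<dots> \<in> AC"
    using qmult_set_plus_inter_mem(2)[OF qsubalgebra_ZP_adj qsubalgebra_ZP_adj IH(2) X2'_mem]
      uT(2) Cring_subset_AC
    by (blast intro: AC.diff_mem AC.tpow_mult_mem)
  finally show "qmult m L (Xmon (p0 + u)) X1' \<in> AC" .
qed

lemma X1'_Xmon_mem_AC:
  assumes "lattice_vec m c" "0 \<le> c 1"
  shows "qmult m L X1' (Xmon c) \<in> AC \<and> qmult m L (Xmon c) X1' \<in> AC"
  using assms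
proof (induction "nat (- c 2)" arbitrary: c rule: less_induct)
  case less
  consider "1 \<le> c 1" | "c 1 = 0" "0 \<le> c 2" | "c 1 = 0" "c 2 < 0"
    using less.prems by linarith
  then show ?case
  proof cases
    case 1
    then show ?thesis
      using X1'_qmult_mem_Cring[of "Xmon c"] less.prems Cring_subset_AC by auto
  next
    case 2
    interpret A: qsubalgebra m L Aring
      by (rule qsubalgebra_ZP_adj)
    have "X1' \<in> Aring" "Xmon c \<in> Aring"
      using 2 less.prems by (simp_all add: generator_mem_ZP_adj Xmon_mem_Aring)
    then show ?thesis
      using A.mult_mem Aring_subset_AC by blast
  next
    case 3
    define u where "u = c - p0"
    have u: "lattice_vec m u" "u 1 = 0" "u 2 = c 2 + 1"
      using less.prems(1) p0_coordinates 3 by (auto simp: u_def lattice_vec_def)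
    then have "qmult m L X1' (Xmon u) \<in> AC \<and> qmult m L (Xmon u) X1' \<in> AC"
      using less.hyps[of u] 3 by auto
    moreover have "c = u + p0" "c = p0 + u"
      by (simp_all add: u_def)
    ultimately show ?thesis
      using X1'_Xmon_add_p0_mem_AC u by metis
  qed
qed

lemma X1'_qmult_Cring_mem_AC:
  assumes "x \<in> Cring"
  shows "qmult m L X1' x \<in> AC \<and> qmult m L x X1' \<in> AC"
proof -
  interpret AC: qsubmodule m L AC
    by (rule qsubmodule_AC)
  have "lattice_vec m c \<and> 0 \<le> c 1" if "c \<in> exponents x" for c
    using assms that by (simp add: Cring_eq)
  then show ?thesis
    using X1'_Xmon_mem_AC
    by (blast intro: AC.qmult_mem_if_exponents_right AC.qmult_mem_if_exponents_left)
qed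

lemma qsubalgebra_AC: "qsubalgebra m L AC"
proof (rule qsubalgebra_set_plus[OF qsubalgebra_ZP_adj qsubalgebra_ZP_adj])
  interpret C: qsubalgebra m L Cring
    by (rule qsubalgebra_ZP_adj)
  have generators: "qmult m L s x \<in> AC \<and> qmult m L x s \<in> AC"
    if "s \<in> ZP_gens 2 m \<union> {X1, X1', X2, X2'}" "x \<in> Cring" for s x
  proof (cases "s = X1'")
    case True
    then show ?thesis
      using X1'_qmult_Cring_mem_AC that(2) by blast
  next
    case False
    with that(1) have "s \<in> Cring"
      using X2'_mem_Cring by (auto intro: generator_mem_ZP_adj)
    then show ?thesis
      using that(2) C.mult_mem Cring_subset_AC by blast
  qed
  have Aring_eq: "Aring = gen_subring m L (ZP_gens 2 m \<union> {X1, X1', X2, X2'})"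
    by (simp only: ZP_adj_def)
  show "qmult m L a x \<in> AC \<and> qmult m L x a \<in> AC" if "a \<in> Aring" "x \<in> Cring" for a x
    using qmult_gen_subring_mem_set_plus[of "ZP_gens 2 m \<union> {X1, X1', X2, X2'}" m L Cring a x,
        folded Aring_eq]
      range_tpow_subset_ZP_gens qsubalgebra_ZP_adj generators that
    by blast
qed

theorem Lring_eq_AC: "Lring = AC"
proof
  interpret Lr: qsubalgebra m L Lring
    by (rule qsubalgebra_ZP_adj)
  have "Cring \<subseteq> Lring"
    by (rule ZP_adj_least[OF qsubalgebra_ZP_adj]) (auto intro: generator_mem_ZP_adj)
  moreover have "Aring \<subseteq> Lring"
    using X2'_mem_Cring \<open>Cring \<subseteq> Lring\<close>
    by (intro ZP_adj_least[OF qsubalgebra_ZP_adj]) (auto intro: generator_mem_ZP_adj)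
  ultimately show "AC \<subseteq> Lring"
    by (blast elim: set_plus_qE intro: Lr.add_mem)
  show "Lring \<subseteq> AC"
    using Cring_subset_AC Aring_subset_AC
    by (intro ZP_adj_least[OF qsubalgebra_AC]) (auto intro: generator_mem_ZP_adj)
qed

end

theorem lemma4p4:
  fixes m :: nat and L B :: "nat \<Rightarrow> nat \<Rightarrow> int" and d :: "nat \<Rightarrow> nat"
    and dt :: "nat \<Rightarrow> int" and h :: "nat \<Rightarrow> nat \<Rightarrow> laurent"
  assumes mn: "m \<ge> 2"
    and skew: "\<forall>i\<in>{1..m}. \<forall>j\<in>{1..m}. L i j = - L j i"
    and dt_pos: "\<forall>l\<in>{1..2}. dt l > 0"
    and compat: "\<forall>k\<in>{1..m}. \<forall>l\<in>{1..2}.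
        (\<Sum>j\<in>{1..m}. L k j * B j l) = (if k = l then - dt l else 0)"
    and d_pos: "\<forall>k\<in>{1..2}. d k > 0"
    and d_dvd: "\<forall>k\<in>{1..2}. \<forall>j\<in>{1..m}. int (d k) dvd B j k"
    and h_end: "\<forall>k\<in>{1..2}. h k 0 = Poly_Mapping.single 0 1 \<and> h k (d k) = Poly_Mapping.single 0 1"
    and h_sym: "\<forall>k\<in>{1..2}. \<forall>r\<in>{0..d k}. h k r = h k (d k - r)"
    and b12: "B 1 2 \<noteq> 0"
  shows "ZP_adj 2 m L {Xmon (unitv 1), Xmut m L B d h 1, Xmon (unitv 2), Xmon (vneg (unitv 2))}
       = set_plus_q
           (ZP_adj 2 m L {Xmon (unitv 1), Xmut m L B d h 1, Xmon (unitv 2), Xmut m L B d h 2})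
           (ZP_adj 2 m L {Xmon (unitv 1), Xmon (unitv 2), Xmon (vneg (unitv 2))})"
proof -
  have "B l l = 0" if "l \<in> {1..2}" for l
    using compat that mn dt_pos[rule_format, OF that]
    by (intro compatible_diag_eq_0[OF skew, where B = B and dt = "dt l"]) auto
  then interpret rank2_seed m L B d h
    using mn d_dvd b12 h_end by unfold_locales auto
  show ?thesis
    by (rule Lring_eq_AC)
qed

end
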